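(* Let $K_1=\overline{1}$ and, for $j\ge1$, let $K_{j+1}$ be the periodic sequence whose repeating block is obtained by writing the repeating block of $K_j$ twice and replacing the last symbol by its complement. For $s=s_1s_2\dots\in\{0,1\}^{\mathbb N}$ let $\tau(s)=\sum_{k\ge1}t_k2^{-k}$ with $t_k=\sum_{i=1}^k s_i\pmod 2$, and put $\tau_j=\tau(K_j)$. Then for every $j\ge1$, $$\tau_j=\frac{p_j}{q_j},\qquad q_j=2^{2^{j-1}}+1,\qquad p_j=2^{2^{j-1}}+1-\prod_{k=0}^{j-2}\bigl(2^{2^k}-1\bigr),$$ this fraction is in lowest terms, and equivalently $$\tau_j=1-\frac{\prod_{k=0}^{j-2}(2^{2^k}-1)}{2^{2^{j-1}}+1}=1-\frac{\prod_{k=0}^{j-1}(1-2^{-2^k})}{2(1-2^{-2^j})}.$$ Moreover $p_1=2,q_1=3$ and $p_{j+1}=2+(2^{2^{j-1}}-1)p_j$, $q_{j+1}=2+(2^{2^{j-1}}-1)q_j$ for $j\ge1$.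
   Context: The empty product equals $1$. For example $\tau_1=2/3$, $\tau_2=4/5$, $\tau_3=14/17$, $\tau_4=212/257$. *)

theory Defs
  imports Complex_Main
begin

text \<open>Repeating block of K_j (as a list of 0/1 naturals). blk 0 is unused
  (we set it equal to blk 1); blk 1 = [1]; blk (j+1) = b @ butlast b @ [1 - last b].\<close>
fun blk :: "nat \<Rightarrow> nat list" where
  "blk 0 = [1]"
| "blk (Suc 0) = [1]"
| "blk (Suc (Suc j)) = (let b = blk (Suc j) in b @ butlast b @ [1 - last b])"

text \<open>K_j as a 0-indexed sequence: K j k is the symbol s_(k+1).\<close>
definition K :: "nat \<Rightarrow> nat \<Rightarrow> nat" where
  "K j k = blk j ! (k mod length (blk j))"

text \<open>tau(s) = sum_(k>=1) t_k 2^(-k), t_k = (s_1+...+s_k) mod 2; with 0-indexed s,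
  t_(n+1) = (sum_(i<=n) s i) mod 2.\<close>
definition tau :: "(nat \<Rightarrow> nat) \<Rightarrow> real" where
  "tau s = (\<Sum>n. real ((\<Sum>i\<le>n. s i) mod 2) / 2 ^ (Suc n))"

definition qq :: "nat \<Rightarrow> int" where
  "qq j = 2 ^ (2 ^ (j - 1)) + 1"

definition pp :: "nat \<Rightarrow> int" where
  "pp j = 2 ^ (2 ^ (j - 1)) + 1 - (\<Prod>k<j - 1. (2 ^ (2 ^ k) - 1))"

end

theory Submission imports Defs begin

text \<open>Since one period of \<open>K\<^sub>j\<close> contains an odd number of ones, the parity sequence
  \<open>t\<close> of \<open>K\<^sub>j\<close> is antiperiodic: \<open>t (n + L) = 1 - t n\<close> for the period \<open>L = 2^(j-1)\<close>.
  Summing the resulting geometric tail gives \<open>\<tau>\<^sub>j = (A\<^sub>j + 2^-L) / (1 + 2^-L)\<close>, where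
  \<open>A\<^sub>j\<close> is the binary fraction formed by the first \<open>L\<close> parities. Two periods of \<open>K\<^sub>j\<close>
  and one period of \<open>K\<^sub>j\<^sub>+\<^sub>1\<close> differ only in the last symbol, which turns the last
  parity from 0 into 1; together with antiperiodicity this gives
  \<open>1 - A\<^sub>j\<^sub>+\<^sub>1 = (1 - A\<^sub>j) (1 - 2^-L)\<close>, so \<open>1 - A\<^sub>j\<close> is a product of the factors
  \<open>1 - 2^-2^k\<close>. The fraction is in lowest terms because every factor \<open>2^2^k - 1\<close>
  divides \<open>2^2^(j-1) - 1\<close>, which is coprime to the odd number \<open>2^2^(j-1) + 1\<close>.\<close>

definition parity :: "(nat \<Rightarrow> nat) \<Rightarrow> nat \<Rightarrow> nat" where
  "parity s n = (\<Sum>i\<le>n. s i) mod 2"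

definition binary_fraction :: "(nat \<Rightarrow> nat) \<Rightarrow> nat \<Rightarrow> real" where
  "binary_fraction t n = (\<Sum>k<n. real (t k) / 2 ^ Suc k)"

lemma parity_le_one: "parity s n \<le> 1"
  unfolding parity_def by simp

lemma parity_cong: "(\<And>i. i \<le> n \<Longrightarrow> s i = s' i) \<Longrightarrow> parity s n = parity s' n"
  unfolding parity_def by simp

lemma tau_eq_suminf_parity: "tau s = (\<Sum>n. real (parity s n) / 2 ^ Suc n)"
  unfolding tau_def parity_def ..

lemma sum_atMost_add_period:
  fixes s :: "nat \<Rightarrow> 'a::comm_monoid_add"
  assumes "\<And>n. s (n + L) = s n"
  shows "(\<Sum>i\<le>n + L. s i) = (\<Sum>i<L. s i) + (\<Sum>i\<le>n. s i)"
proof (induction n)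
  case 0
  show ?case using assms[of 0] by (simp add: lessThan_Suc_atMost[symmetric])
next
  case (Suc n)
  then show ?case using assms[of "Suc n"] by (simp add: ac_simps)
qed

lemma parity_add_period:
  assumes "\<And>n. s (n + L) = s n" and "odd (\<Sum>i<L. s i)"
  shows "parity s (n + L) = 1 - parity s n"
proof -
  have "odd a \<Longrightarrow> (a + b) mod 2 = 1 - b mod 2" for a b :: nat by presburger
  then show ?thesis
    unfolding parity_def sum_atMost_add_period[where s = s and L = L, OF assms(1)]
    using assms(2) .
qed

lemma parity_period_last:
  assumes "0 < L" and "odd (\<Sum>i<L. s i)"
  shows "parity s (L - 1) = 1"
  using assms unfolding parity_def
  by (simp add: lessThan_Suc_atMost[symmetric] odd_iff_mod_2_eq_one)

lemma binary_fraction_0 [simp]: "binary_fraction t 0 = 0"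
  unfolding binary_fraction_def by simp

lemma binary_fraction_Suc [simp]:
  "binary_fraction t (Suc n) = binary_fraction t n + real (t n) / 2 ^ Suc n"
  unfolding binary_fraction_def by simp

lemma binary_fraction_cong:
  "(\<And>k. k < n \<Longrightarrow> t k = t' k) \<Longrightarrow> binary_fraction t n = binary_fraction t' n"
  unfolding binary_fraction_def by simp

lemma binary_fraction_antiperiodic:
  assumes le1: "\<And>n. t n \<le> 1" and anti: "\<And>n. t (n + L) = 1 - t n"
  shows "binary_fraction t (L + k)
           = binary_fraction t L + (1 - 1 / 2 ^ k - binary_fraction t k) / 2 ^ L"
proof (induction k)
  case 0
  show ?case by simp
next
  case (Suc k)
  have "real (t (L + k)) = 1 - real (t k)"
    using anti[of k] le1[of k] by (simp add: add.commute of_nat_diff)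
  moreover have "(2::real) ^ Suc (L + k) = 2 ^ L * 2 ^ Suc k"
    by (simp add: power_add)
  ultimately have "binary_fraction t (L + Suc k)
      = binary_fraction t L + (1 - 1 / 2 ^ k - binary_fraction t k) / 2 ^ L
        + (1 - real (t k)) / (2 ^ L * 2 ^ Suc k)"
    by (simp add: Suc.IH)
  also have "\<dots> = binary_fraction t L + (1 - 1 / 2 ^ Suc k - binary_fraction t (Suc k)) / 2 ^ L"
    by (simp add: field_simps)
  finally show ?case .
qed

lemma binary_fraction_LIMSEQ:
  assumes "\<And>n. t n \<le> 1"
  shows "binary_fraction t \<longlonglongrightarrow> (\<Sum>n. real (t n) / 2 ^ Suc n)"
proof -
  have "summable (\<lambda>n. real (t n) / 2 ^ Suc n)"
  proof (rule summable_comparison_test'[OF sums_summable[OF power_half_series]])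
    fix n
    show "norm (real (t n) / 2 ^ Suc n) \<le> (1 / 2) ^ Suc n"
      using assms[of n] by (simp add: power_divide divide_right_mono)
  qed
  then show ?thesis unfolding binary_fraction_def by (rule summable_LIMSEQ)
qed

lemma suminf_binary_antiperiodic:
  assumes le1: "\<And>n. t n \<le> 1" and anti: "\<And>n. t (n + L) = 1 - t n"
  shows "(\<Sum>n. real (t n) / 2 ^ Suc n) = (binary_fraction t L + 1 / 2 ^ L) / (1 + 1 / 2 ^ L)"
    (is "?S = _")
proof -
  have lim: "binary_fraction t \<longlonglongrightarrow> ?S" by (rule binary_fraction_LIMSEQ[OF le1])
  have "(\<lambda>k. binary_fraction t (k + L)) \<longlonglongrightarrow> ?S"
    by (rule LIMSEQ_ignore_initial_segment[OF lim])
  moreover have "(\<lambda>k. binary_fraction t (k + L)) \<longlonglongrightarrow> binary_fraction t L + (1 - 0 - ?S) / 2 ^ L"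
    unfolding add.commute[of _ L] binary_fraction_antiperiodic[where t = t and L = L, OF le1 anti]
    by (intro tendsto_intros lim LIMSEQ_divide_realpow_zero) simp_all
  ultimately have "?S = binary_fraction t L + (1 - ?S) / 2 ^ L"
    by (simp add: LIMSEQ_unique)
  then have "?S * (1 + 1 / 2 ^ L) = binary_fraction t L + 1 / 2 ^ L"
    by (simp add: field_simps)
  moreover have "(0::real) < 1 + 1 / 2 ^ L"
    by (intro add_pos_pos) simp_all
  ultimately show ?thesis
    by (simp add: eq_divide_eq)
qed

lemma tau_periodic:
  assumes "\<And>n. s (n + L) = s n" and "odd (\<Sum>i<L. s i)"
  shows "tau s = (binary_fraction (parity s) L + 1 / 2 ^ L) / (1 + 1 / 2 ^ L)"
  unfolding tau_eq_suminf_parity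
  by (rule suminf_binary_antiperiodic) (use parity_le_one parity_add_period[OF assms] in auto)

lemma blk_Suc_Suc:
  "blk (Suc (Suc j)) = blk (Suc j) @ butlast (blk (Suc j)) @ [1 - last (blk (Suc j))]"
  by (simp add: Let_def)

declare blk.simps(3) [simp del]

lemma length_blk: "length (blk (Suc m)) = 2 ^ m"
  by (induction m) (simp_all add: blk_Suc_Suc)

lemma blk_ne_Nil: "blk j \<noteq> []"
  by (induction j rule: blk.induct) (simp_all add: blk_Suc_Suc)

lemma set_blk: "set (blk j) \<subseteq> {0, 1}"
  by (induction j rule: blk.induct) (auto simp: blk_Suc_Suc dest: in_set_butlastD)

lemma odd_sum_list_blk: "odd (sum_list (blk j))"
proof (cases j rule: blk.cases)
  case (3 i)
  define b where "b = blk (Suc i)"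
  have "b \<noteq> []" unfolding b_def by (rule blk_ne_Nil)
  then have "last b \<le> 1"
    using set_blk[of "Suc i"] last_in_set[of b] unfolding b_def by fastforce
  have "sum_list b = sum_list (butlast b @ [last b])"
    using \<open>b \<noteq> []\<close> by simp
  then have "sum_list b = sum_list (butlast b) + last b" by simp
  then have "sum_list (blk j) = 2 * sum_list (butlast b) + 1"
    using \<open>last b \<le> 1\<close> unfolding 3 blk_Suc_Suc b_def[symmetric] by simp
  then show ?thesis by simp
qed simp_all

lemma nth_append_take_self:
  assumes "n \<le> length xs" and "i < length xs + n"
  shows "(xs @ take n xs) ! i = xs ! (i mod length xs)"
  using assms by (auto simp: nth_append le_mod_geq)

lemma K_add_period: "K j (n + length (blk j)) = K j n"
  unfolding K_def by simp

lemma odd_sum_K_period: "odd (\<Sum>i<length (blk j). K j i)"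
proof -
  have "(\<Sum>i<length (blk j). K j i) = sum_list (blk j)"
    unfolding K_def by (simp add: sum_list_sum_nth atLeast0LessThan)
  then show ?thesis using odd_sum_list_blk by simp
qed

lemma K_Suc_Suc:
  assumes "i < 2 * 2 ^ m - 1"
  shows "K (Suc (Suc m)) i = K (Suc m) i"
proof -
  define b where "b = blk (Suc m)"
  have "length b = 2 ^ m" unfolding b_def by (rule length_blk)
  have blk_eq: "blk (Suc (Suc m)) = (b @ take (2 ^ m - 1) b) @ [1 - last b]"
    by (simp add: blk_Suc_Suc b_def[symmetric] butlast_conv_take \<open>length b = 2 ^ m\<close>)
  have "i < length (b @ take (2 ^ m - 1) b)"
    using assms \<open>length b = 2 ^ m\<close> by simp
  then have "blk (Suc (Suc m)) ! i = (b @ take (2 ^ m - 1) b) ! i"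
    unfolding blk_eq by (rule nth_append_left)
  also have "\<dots> = b ! (i mod 2 ^ m)"
    using assms \<open>length b = 2 ^ m\<close> by (simp add: nth_append_take_self)
  finally show ?thesis
    using assms unfolding K_def length_blk b_def by simp
qed

lemma parity_K_add_period: "parity (K j) (n + length (blk j)) = 1 - parity (K j) n"
  by (rule parity_add_period[OF K_add_period odd_sum_K_period])

definition block_fraction :: "nat \<Rightarrow> real" where
  "block_fraction j = binary_fraction (parity (K j)) (length (blk j))"

lemma tau_K:
  "tau (K j) = (block_fraction j + 1 / 2 ^ length (blk j)) / (1 + 1 / 2 ^ length (blk j))"
  unfolding block_fraction_def
  by (rule tau_periodic[OF K_add_period odd_sum_K_period])

lemma one_minus_block_fraction_Suc_Suc:
  "1 - block_fraction (Suc (Suc m)) = (1 - block_fraction (Suc m)) * (1 - 1 / 2 ^ 2 ^ m)"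
proof -
  define L :: nat where "L = 2 ^ m"
  define n where "n = 2 * L - 1"
  define x :: real where "x = 1 / 2 ^ L"
  define t where "t = parity (K (Suc m))"
  define t' where "t' = parity (K (Suc (Suc m)))"
  have "0 < L" unfolding L_def by simp
  then have Suc_n: "Suc n = L + L" unfolding n_def by simp
  have len: "length (blk (Suc m)) = L" "length (blk (Suc (Suc m))) = Suc n"
    unfolding Suc_n L_def length_blk by simp_all
  have le1: "t k \<le> 1" for k
    unfolding t_def by (rule parity_le_one)
  have anti: "t (k + L) = 1 - t k" for k
    unfolding t_def using parity_K_add_period[of "Suc m" k] by (simp add: len)
  have "t' n = 1"
    unfolding t'_def using odd_sum_K_period[of "Suc (Suc m)", unfolded len]
    by (metis diff_Suc_1 parity_period_last zero_less_Suc)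
  have "t (L - 1) = 1"
    unfolding t_def using \<open>0 < L\<close> odd_sum_K_period[of "Suc m", unfolded len]
    by (intro parity_period_last)
  then have "t n = 0"
    using anti[of "L - 1"] \<open>0 < L\<close> unfolding n_def by (simp add: mult_2)
  have "binary_fraction t' n = binary_fraction t n"
    unfolding t_def t'_def n_def
    by (intro binary_fraction_cong parity_cong) (simp add: K_Suc_Suc L_def)
  then have "block_fraction (Suc (Suc m)) = binary_fraction t (L + L) + 1 / 2 ^ (L + L)"
    using \<open>t n = 0\<close> \<open>t' n = 1\<close> unfolding block_fraction_def len(2) Suc_n[symmetric]
    by (simp flip: t'_def)
  also have "\<dots> = block_fraction (Suc m) + (1 - x - block_fraction (Suc m)) * x + x * x"
    using binary_fraction_antiperiodic[where t = t and L = L, OF le1 anti]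
    by (simp add: block_fraction_def len x_def power_add flip: t_def)
  finally show ?thesis
    unfolding L_def[symmetric] x_def[symmetric] by (simp add: algebra_simps)
qed

lemma one_minus_block_fraction:
  "1 - block_fraction (Suc m) = (\<Prod>k<m. 1 - 1 / 2 ^ 2 ^ k) / 2"
proof (induction m)
  case 0
  show ?case by (simp add: block_fraction_def K_def parity_def)
next
  case (Suc m)
  then show ?case by (simp add: one_minus_block_fraction_Suc_Suc)
qed

lemma tau_K_prod:
  "tau (K (Suc m)) = 1 - (\<Prod>k<m. 1 - 1 / 2 ^ 2 ^ k) / (2 * (1 + 1 / 2 ^ 2 ^ m))"
proof -
  define Q where "Q = (\<Prod>k<m. 1 - 1 / 2 ^ 2 ^ k :: real)"
  define x :: real where "x = 1 / 2 ^ 2 ^ m"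
  have bf: "block_fraction (Suc m) = 1 - Q / 2"
    using one_minus_block_fraction[of m] unfolding Q_def by simp
  have "0 < 1 + x"
    unfolding x_def by (intro add_pos_pos) simp_all
  then show ?thesis
    unfolding tau_K length_blk bf Q_def[symmetric] x_def[symmetric] by (simp add: field_simps)
qed

lemma prod_one_minus_inverse_power:
  "(\<Prod>k<m. 1 - 1 / 2 ^ 2 ^ k :: real) = 2 * (\<Prod>k<m. 2 ^ 2 ^ k - 1) / 2 ^ 2 ^ m"
proof (induction m)
  case 0
  show ?case by simp
next
  case (Suc m)
  have "(2::real) ^ 2 ^ Suc m = 2 ^ 2 ^ m * 2 ^ 2 ^ m"
    by (simp add: mult_2 power_add)
  then show ?case
    unfolding prod.lessThan_Suc Suc.IH by (simp add: field_simps)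
qed

lemma tau_K_Fermat:
  "tau (K (Suc m)) = 1 - real_of_int (\<Prod>k<m. (2 ^ 2 ^ k - 1 :: int)) / (2 ^ 2 ^ m + 1)"
proof -
  define P where "P = (\<Prod>k<m. 2 ^ 2 ^ k - 1 :: real)"
  define N :: real where "N = 2 ^ 2 ^ m"
  have "0 < N" unfolding N_def by simp
  have "tau (K (Suc m)) = 1 - (2 * P / N) / (2 * (1 + 1 / N))"
    unfolding tau_K_prod prod_one_minus_inverse_power P_def N_def ..
  also have "\<dots> = 1 - P / (N + 1)"
    using \<open>0 < N\<close> by (simp add: field_simps)
  finally show ?thesis
    unfolding P_def N_def by simp
qed

lemma tau_K_prod_Suc:
  "tau (K (Suc m)) = 1 - (\<Prod>k<Suc m. 1 - 1 / 2 ^ 2 ^ k) / (2 * (1 - 1 / 2 ^ 2 ^ Suc m))"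
proof -
  define Q where "Q = (\<Prod>k<m. 1 - 1 / 2 ^ 2 ^ k :: real)"
  define x :: real where "x = 1 / 2 ^ 2 ^ m"
  have "x < 1" unfolding x_def by simp
  have "(1::real) / 2 ^ 2 ^ Suc m = x * x"
    unfolding x_def by (simp add: mult_2 power_add)
  then have "(\<Prod>k<Suc m. 1 - 1 / 2 ^ 2 ^ k) / (2 * (1 - 1 / 2 ^ 2 ^ Suc m))
      = Q * (1 - x) / (2 * ((1 - x) * (1 + x)))"
    unfolding prod.lessThan_Suc Q_def x_def by (simp add: algebra_simps)
  also have "\<dots> = Q / (2 * (1 + x))"
    using \<open>x < 1\<close> by simp
  finally show ?thesis
    unfolding tau_K_prod Q_def x_def by simp
qed

lemma pp_div_qq:
  "real_of_int (pp (Suc m)) / real_of_int (qq (Suc m))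
     = 1 - real_of_int (\<Prod>k<m. (2 ^ 2 ^ k - 1 :: int)) / (2 ^ 2 ^ m + 1)"
proof -
  have "(0::real) < 2 ^ 2 ^ m + 1" by (intro add_pos_pos) simp_all
  then show ?thesis
    unfolding pp_def qq_def by (simp add: diff_divide_distrib)
qed

lemma power_minus_one_dvd:
  fixes a :: "'a::comm_ring_1"
  assumes "d dvd n"
  shows "a ^ d - 1 dvd a ^ n - 1"
proof -
  obtain q where "n = d * q" using assms by blast
  then have "a ^ n - 1 = (a ^ d - 1) * (\<Sum>i<q. (a ^ d) ^ i)"
    by (simp add: power_mult power_diff_1_eq)
  then show ?thesis by simp
qed

lemma coprime_Fermat_factor:
  assumes "k \<le> m"
  shows "coprime (2 ^ 2 ^ k - 1 :: int) (2 ^ 2 ^ m + 1)"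
proof -
  define x :: int where "x = 2 ^ 2 ^ m - 1"
  have "odd x" unfolding x_def by simp
  then have "coprime x 2" by simp
  then have "coprime x (x + 2)"
    by (simp add: coprime_iff_gcd_eq_1 gcd_add2)
  then have "coprime (2 ^ 2 ^ m - 1 :: int) (2 ^ 2 ^ m + 1)"
    unfolding x_def by (simp add: add.commute)
  moreover have "(2 ^ 2 ^ k - 1 :: int) dvd 2 ^ 2 ^ m - 1"
    using assms by (intro power_minus_one_dvd le_imp_power_dvd)
  ultimately show ?thesis
    by (rule coprime_divisors[OF _ dvd_refl, rotated])
qed

lemma coprime_pp_qq: "coprime (pp (Suc m)) (qq (Suc m))"
proof -
  have "coprime (\<Prod>k<m. 2 ^ 2 ^ k - 1 :: int) (2 ^ 2 ^ m + 1)"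
    by (rule prod_coprime_left) (simp add: coprime_Fermat_factor)
  then show ?thesis
    unfolding pp_def qq_def by (simp add: coprime_iff_gcd_eq_1 gcd_diff2)
qed

lemma pp_Suc_Suc: "pp (Suc (Suc m)) = 2 + (2 ^ 2 ^ m - 1) * pp (Suc m)"
proof -
  have "(2::int) ^ 2 ^ Suc m = 2 ^ 2 ^ m * 2 ^ 2 ^ m"
    by (simp add: mult_2 power_add)
  then show ?thesis
    unfolding pp_def by (simp add: algebra_simps)
qed

lemma qq_Suc_Suc: "qq (Suc (Suc m)) = 2 + (2 ^ 2 ^ m - 1) * qq (Suc m)"
proof -
  have "(2::int) ^ 2 ^ Suc m = 2 ^ 2 ^ m * 2 ^ 2 ^ m"
    by (simp add: mult_2 power_add)
  then show ?thesis
    unfolding qq_def by (simp add: algebra_simps)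
qed

theorem mainTheorem5:
  shows "(\<forall>j\<ge>1.
            tau (K j) = real_of_int (pp j) / real_of_int (qq j)
          \<and> coprime (pp j) (qq j)
          \<and> tau (K j) = 1 - real_of_int (\<Prod>k<j - 1. (2 ^ (2 ^ k) - 1 :: int)) / (2 ^ (2 ^ (j - 1)) + 1)
          \<and> tau (K j) = 1 - (\<Prod>k<j. (1 - 1 / 2 ^ (2 ^ k) :: real)) / (2 * (1 - 1 / 2 ^ (2 ^ j))))
        \<and> pp 1 = 2 \<and> qq 1 = 3
        \<and> (\<forall>j\<ge>1. pp (j + 1) = 2 + (2 ^ (2 ^ (j - 1)) - 1) * pp j
                \<and> qq (j + 1) = 2 + (2 ^ (2 ^ (j - 1)) - 1) * qq j)"
proof (intro conjI allI impI)
  fix j :: nat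
  assume "j \<ge> 1"
  then obtain m where j: "j = Suc m" by (cases j) auto
  show "tau (K j) = real_of_int (pp j) / real_of_int (qq j)"
    unfolding j pp_div_qq by (rule tau_K_Fermat)
  show "coprime (pp j) (qq j)"
    unfolding j by (rule coprime_pp_qq)
  show "tau (K j) = 1 - real_of_int (\<Prod>k<j - 1. (2 ^ (2 ^ k) - 1 :: int)) / (2 ^ (2 ^ (j - 1)) + 1)"
    unfolding j using tau_K_Fermat by simp
  show "tau (K j) = 1 - (\<Prod>k<j. (1 - 1 / 2 ^ (2 ^ k) :: real)) / (2 * (1 - 1 / 2 ^ (2 ^ j)))"
    unfolding j by (rule tau_K_prod_Suc)
  show "pp (j + 1) = 2 + (2 ^ (2 ^ (j - 1)) - 1) * pp j"
    unfolding j using pp_Suc_Suc by simp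
  show "qq (j + 1) = 2 + (2 ^ (2 ^ (j - 1)) - 1) * qq j"
    unfolding j using qq_Suc_Suc by simp
qed (simp_all add: pp_def qq_def)

end
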